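(* Let $h$ be a non-degenerate symmetric $(0,2)$-tensor field and $J_1,J_2$ $h$-symmetric $(1,1)$-tensor fields on a smooth manifold $M$, let $H_1,H_2:T^*M\to TM$ be bundle morphisms, and define $\hat J_i(X+\eta)=J_iX+H_i\eta+h(X)-J_i^*\eta$, $i=1,2$, on $TM\oplus T^*M$. Then $\hat J_1\hat J_2=-\hat J_2\hat J_1$ if and only if $J_1J_2+J_2J_1=-(H_1+H_2)h$, $J_1^*J_2^*+J_2^*J_1^*=-h(H_1+H_2)$, and $J_1H_2-H_2J_1^*=H_1J_2^*-J_2H_1$.
   Context: $h$ is viewed as the isomorphism $TM\to T^*M$, $X\mapsto h(X,\cdot)$; $(J^*\eta)(X)=\eta(JX)$; $J$ is $h$-symmetric if $h(JX,Y)=h(X,JY)$. Compositions such as $(H_1+H_2)h$ are compositions of bundle maps. *)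

theory Defs
  imports "HOL-Analysis.Analysis"
begin

text \<open>Fibrewise (pointwise) model: a fibre T_pM is a finite-dimensional real
vector space 'a; covectors are linear functionals 'a \<Rightarrow> real.\<close>

definition covec :: "('a::real_vector \<Rightarrow> real) \<Rightarrow> bool" where
  "covec \<eta> \<longleftrightarrow> linear \<eta>"

definition flat :: "('a \<Rightarrow> 'a \<Rightarrow> real) \<Rightarrow> 'a \<Rightarrow> ('a \<Rightarrow> real)" where
  "flat h X = (\<lambda>Y. h X Y)"

definition dualmap :: "('a \<Rightarrow> 'a) \<Rightarrow> ('a \<Rightarrow> real) \<Rightarrow> ('a \<Rightarrow> real)" where
  "dualmap J \<eta> = (\<lambda>X. \<eta> (J X))"

definition nondeg_sym :: "('a::real_vector \<Rightarrow> 'a \<Rightarrow> real) \<Rightarrow> bool" where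
  "nondeg_sym h \<longleftrightarrow> bilinear h \<and> (\<forall>X Y. h X Y = h Y X) \<and>
     (\<forall>X. (\<forall>Y. h X Y = 0) \<longrightarrow> X = 0)"

definition h_symmetric :: "('a::real_vector \<Rightarrow> 'a \<Rightarrow> real) \<Rightarrow> ('a \<Rightarrow> 'a) \<Rightarrow> bool" where
  "h_symmetric h J \<longleftrightarrow> linear J \<and> (\<forall>X Y. h (J X) Y = h X (J Y))"

definition cotan_morphism :: "(('a::real_vector \<Rightarrow> real) \<Rightarrow> 'a) \<Rightarrow> bool" where
  "cotan_morphism H \<longleftrightarrow> (\<forall>\<eta> \<zeta> a b. covec \<eta> \<longrightarrow> covec \<zeta> \<longrightarrow>
      H (\<lambda>X. a * \<eta> X + b * \<zeta> X) = a *\<^sub>R H \<eta> + b *\<^sub>R H \<zeta>)"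

definition genJ :: "('a::real_vector \<Rightarrow> 'a \<Rightarrow> real) \<Rightarrow> ('a \<Rightarrow> 'a) \<Rightarrow> (('a \<Rightarrow> real) \<Rightarrow> 'a)
    \<Rightarrow> 'a \<times> ('a \<Rightarrow> real) \<Rightarrow> 'a \<times> ('a \<Rightarrow> real)" where
  "genJ h J H p = (J (fst p) + H (snd p), (\<lambda>Y. flat h (fst p) Y - dualmap J (snd p) Y))"

end

theory Submission
  imports Defs "HOL-Library.Function_Algebras"
begin

text \<open>The anticommutator \<open>\<hat>J\<^sub>1\<hat>J\<^sub>2 + \<hat>J\<^sub>2\<hat>J\<^sub>1\<close> is computed
  componentwise. Its \<open>T*M\<close>-component does not depend on \<open>X\<close>, since the \<open>h\<close>-symmetry
  \<open>J\<^sup>* h = h J\<close> makes the mixed terms \<open>hJ\<^sub>2X - J\<^sub>1\<^sup>*hX\<close> and \<open>hJ\<^sub>1X - J\<^sub>2\<^sup>*hX\<close> cancel,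
  and its \<open>TM\<close>-component is the sum of a part linear in \<open>X\<close> and a part linear in \<open>\<eta>\<close>.
  Taking \<open>\<eta> = 0\<close> and \<open>X = 0\<close> separates the three conditions.\<close>

lemma all_add_eq_0_iff:
  fixes f :: "'a \<Rightarrow> 'c::monoid_add"
  assumes "f x\<^sub>0 = 0" and "g y\<^sub>0 = 0" and "P y\<^sub>0"
  shows "(\<forall>x y. P y \<longrightarrow> f x + g y = 0) \<longleftrightarrow> (\<forall>x. f x = 0) \<and> (\<forall>y. P y \<longrightarrow> g y = 0)"
  using assms by (metis add.left_neutral add.right_neutral)

lemma covec_zero: "covec (\<lambda>_. 0)"
  by (simp add: covec_def linear_zero)

lemma covec_flat: "bilinear h \<Longrightarrow> covec (flat h X)"
  by (simp add: bilinear_def covec_def flat_def)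

lemma covec_dualmap: "linear J \<Longrightarrow> covec \<eta> \<Longrightarrow> covec (dualmap J \<eta>)"
  unfolding covec_def dualmap_def using linear_compose[of J \<eta>] by (simp add: comp_def)

lemma flat_zero: "bilinear h \<Longrightarrow> flat h 0 = (\<lambda>_. 0)"
  by (simp add: flat_def bilinear_lzero)

lemma cotan_morphism_diff:
  assumes "cotan_morphism H" "covec \<eta>" "covec \<zeta>"
  shows "H (\<lambda>Y. \<eta> Y - \<zeta> Y) = H \<eta> - H \<zeta>"
proof -
  have "H (\<lambda>Y. 1 * \<eta> Y + (- 1) * \<zeta> Y) = 1 *\<^sub>R H \<eta> + (- 1) *\<^sub>R H \<zeta>"
    using assms unfolding cotan_morphism_def by blast
  then show ?thesis
    by simp
qed

lemma cotan_morphism_zero: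
  assumes "cotan_morphism H"
  shows "H (\<lambda>_. 0) = 0"
  using cotan_morphism_diff[OF assms covec_zero covec_zero] by simp

lemma genJ_anticommutator:
  assumes "bilinear h" and J1: "h_symmetric h J1" and J2: "h_symmetric h J2"
    and H1: "cotan_morphism H1" and H2: "cotan_morphism H2" and "covec \<eta>"
  shows "genJ h J1 H1 (genJ h J2 H2 (X, \<eta>)) + genJ h J2 H2 (genJ h J1 H1 (X, \<eta>)) =
    (J1 (J2 X) + J2 (J1 X) + H1 (flat h X) + H2 (flat h X)
       + (J1 (H2 \<eta>) - H2 (dualmap J1 \<eta>) - H1 (dualmap J2 \<eta>) + J2 (H1 \<eta>)),
     \<lambda>Y. dualmap J1 (dualmap J2 \<eta>) Y + dualmap J2 (dualmap J1 \<eta>) Y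
       + flat h (H1 \<eta>) Y + flat h (H2 \<eta>) Y)"
    (is "?S = (?tangent, ?cotangent)")
proof -
  have "linear J1" "linear J2" and hsym1: "\<And>X Y. h (J1 X) Y = h X (J1 Y)"
    and hsym2: "\<And>X Y. h (J2 X) Y = h X (J2 Y)"
    using J1 J2 by (simp_all add: h_symmetric_def)
  have H_diff: "H1 (\<lambda>Y. flat h X Y - dualmap J2 \<eta> Y) = H1 (flat h X) - H1 (dualmap J2 \<eta>)"
    "H2 (\<lambda>Y. flat h X Y - dualmap J1 \<eta> Y) = H2 (flat h X) - H2 (dualmap J1 \<eta>)"
    using assms by (simp_all add: cotan_morphism_diff covec_flat covec_dualmap h_symmetric_def)
  have tangent_part: "fst ?S = ?tangent"
    unfolding genJ_def fst_add fst_conv snd_conv H_diff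
    using \<open>linear J1\<close> \<open>linear J2\<close> by (simp add: linear_add linear_diff algebra_simps)
  have "snd ?S = ?cotangent"
    using \<open>bilinear h\<close>
    by (simp add: genJ_def flat_def dualmap_def fun_eq_iff bilinear_ladd hsym1 hsym2 algebra_simps)
  then show ?thesis
    using tangent_part by (metis prod.collapse)
qed

theorem proposition3p12:
  fixes h :: "'a::euclidean_space \<Rightarrow> 'a \<Rightarrow> real"
    and J1 J2 :: "'a \<Rightarrow> 'a"
    and H1 H2 :: "('a \<Rightarrow> real) \<Rightarrow> 'a"
  assumes "nondeg_sym h"
    and "h_symmetric h J1" and "h_symmetric h J2"
    and "cotan_morphism H1" and "cotan_morphism H2"
  shows "(\<forall>X \<eta>. covec \<eta> \<longrightarrow>
            genJ h J1 H1 (genJ h J2 H2 (X, \<eta>)) = - genJ h J2 H2 (genJ h J1 H1 (X, \<eta>)))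
     \<longleftrightarrow>
         (\<forall>X. J1 (J2 X) + J2 (J1 X) = - (H1 (flat h X) + H2 (flat h X)))
       \<and> (\<forall>\<eta>. covec \<eta> \<longrightarrow>
            (\<lambda>Y. dualmap J1 (dualmap J2 \<eta>) Y + dualmap J2 (dualmap J1 \<eta>) Y)
              = (\<lambda>Y. - (flat h (H1 \<eta>) Y + flat h (H2 \<eta>) Y)))
       \<and> (\<forall>\<eta>. covec \<eta> \<longrightarrow>
            J1 (H2 \<eta>) - H2 (dualmap J1 \<eta>) = H1 (dualmap J2 \<eta>) - J2 (H1 \<eta>))"
proof -
  have "bilinear h"
    using assms(1) by (simp add: nondeg_sym_def)
  define A where "A X = J1 (J2 X) + J2 (J1 X) + H1 (flat h X) + H2 (flat h X)" for X
  define B where "B \<eta> = (\<lambda>Y. dualmap J1 (dualmap J2 \<eta>) Y + dualmap J2 (dualmap J1 \<eta>) Y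
    + flat h (H1 \<eta>) Y + flat h (H2 \<eta>) Y)" for \<eta>
  define C where "C \<eta> = J1 (H2 \<eta>) - H2 (dualmap J1 \<eta>) - H1 (dualmap J2 \<eta>) + J2 (H1 \<eta>)"
    for \<eta>
  have anticommute_iff: "genJ h J1 H1 (genJ h J2 H2 (X, \<eta>)) = - genJ h J2 H2 (genJ h J1 H1 (X, \<eta>))
      \<longleftrightarrow> A X + C \<eta> = 0 \<and> B \<eta> = 0" if "covec \<eta>" for X \<eta>
    using genJ_anticommutator[OF \<open>bilinear h\<close> assms(2-5) that, of X]
    by (simp add: eq_neg_iff_add_eq_0 A_def B_def C_def zero_prod_def)
  have "A 0 = 0" "C (\<lambda>_. 0) = 0"
    using assms(2-5) \<open>bilinear h\<close>
    by (simp_all add: A_def C_def flat_zero cotan_morphism_zero h_symmetric_def linear_0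
        dualmap_def)
  have "(\<forall>X \<eta>. covec \<eta> \<longrightarrow> A X + C \<eta> = 0 \<and> B \<eta> = 0)
      \<longleftrightarrow> (\<forall>X. A X = 0) \<and> (\<forall>\<eta>. covec \<eta> \<longrightarrow> B \<eta> = 0) \<and> (\<forall>\<eta>. covec \<eta> \<longrightarrow> C \<eta> = 0)"
    using all_add_eq_0_iff[of A 0 C "\<lambda>_. 0" covec] \<open>A 0 = 0\<close> \<open>C (\<lambda>_. 0) = 0\<close> covec_zero
    by blast
  moreover have "A X = 0 \<longleftrightarrow> J1 (J2 X) + J2 (J1 X) = - (H1 (flat h X) + H2 (flat h X))" for X
    by (simp add: A_def eq_neg_iff_add_eq_0 add.assoc del: minus_add_distrib)
  moreover have "B \<eta> = 0 \<longleftrightarrow> (\<lambda>Y. dualmap J1 (dualmap J2 \<eta>) Y + dualmap J2 (dualmap J1 \<eta>) Y)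
      = (\<lambda>Y. - (flat h (H1 \<eta>) Y + flat h (H2 \<eta>) Y))" for \<eta>
    by (simp add: B_def fun_eq_iff eq_neg_iff_add_eq_0 add.assoc del: minus_add_distrib)
  moreover have "C \<eta> = 0 \<longleftrightarrow> J1 (H2 \<eta>) - H2 (dualmap J1 \<eta>) = H1 (dualmap J2 \<eta>) - J2 (H1 \<eta>)"
    for \<eta>
    by (auto simp: C_def algebra_simps)
  ultimately show ?thesis
    using anticommute_iff by simp
qed

end
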